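(* Let $R$ be a type $(1,1)$ tensor on $E$ with $R(dt)=0$, $\widetilde{R}$ its complete lift to $J^1\tau^*$, and $P$ the canonical Poisson map on $J^1\tau^*$. Then the Magri–Morosi concomitant $\mu_{\widetilde{R},P}$ vanishes identically.
   Context: Setting: $\tau:E\to\mathbb{R}$, $\dim E=n+1$, adapted coordinates $(t,q^i)$, allowed changes $t\mapsto t$, $q\mapsto Q(t,q)$; $J^1\tau^*=T^*E/\langle dt\rangle$, coordinates $(t,q^i,p_i)$ (class of $p_idq^i$). $(1,1)$ tensors act on 1-forms by the adjoint $\langle S(Z),\sigma\rangle=\langle Z,S(\sigma)\rangle$; locally $R=R^i_j\partial_{q^i}\otimes dq^j+R^i_0\partial_{q^i}\otimes dt$. Complete lift: $\widetilde{R}=R^i_j(\partial_{q^i}\otimes dq^j+\partial_{p_j}\otimes dp_i)+R^i_0\partial_{q^i}\otimes dt+p_i(\frac{\partial R^i_j}{\partial q^k}-\frac{\partial R^i_k}{\partial q^j})\partial_{p_j}\otimes dq^k+p_i(\frac{\partial R^i_k}{\partial t}-\frac{\partial R^i_0}{\partial q^k})\partial_{p_k}\otimes dt$. Canonical Poisson structure: $\Lambda=\partial_{q^i}\wedge\partial_{p_i}$ on $J^1\tau^*$; $P$ maps 1-forms to vector fields by $\Lambda(\alpha,\beta)=\langle P(\alpha),\beta\rangle$. One has $P\circ\widetilde{R}=\widetilde{R}\circ P$. Magri–Morosi concomitant: the $(1,2)$ tensor $\mu_{\widetilde{R},P}(\sigma,Z)=(\mathcal{L}_{P(\sigma)}\widetilde{R})(Z)-P\big(\mathcal{L}_Z(\widetilde{R}(\sigma))\big)+P\big(\mathcal{L}_{\widetilde{R}(Z)}\sigma\big)$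 for 1-forms $\sigma$ and vector fields $Z$ on $J^1\tau^*$. *)

theory Defs
  imports "HOL-Analysis.Analysis"
begin

text \<open>Local adapted coordinates. A point of the chart of E is (t,q), a point of the
  induced chart of J1 tau* is (t,q,p). Tensor fields are given by their component
  functions in these coordinates.\<close>

type_synonym 'n Ept = "real \<times> (real^'n)"
type_synonym 'n Jpt = "real \<times> (real^'n) \<times> (real^'n)"

datatype 'n eidx = Te | Qe 'n
datatype 'n jidx = Tj | Qj 'n | Pj 'n

definition pd :: "('a::real_normed_vector \<Rightarrow> real) \<Rightarrow> 'a \<Rightarrow> 'a \<Rightarrow> real" where
  "pd f v x = deriv (\<lambda>s. f (x + s *\<^sub>R v)) 0"

fun Ck_on :: "nat \<Rightarrow> 'a::euclidean_space set \<Rightarrow> ('a \<Rightarrow> real) \<Rightarrow> bool" where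
  "Ck_on 0 U f = continuous_on U f"
| "Ck_on (Suc k) U f = (f differentiable_on U \<and> (\<forall>v\<in>Basis. Ck_on k U (pd f v)))"

definition smooth_on :: "'a::euclidean_space set \<Rightarrow> ('a \<Rightarrow> real) \<Rightarrow> bool" where
  "smooth_on U f = (\<forall>k. Ck_on k U f)"

fun edir :: "'n::finite eidx \<Rightarrow> 'n Ept" where
  "edir Te = (1, 0)"
| "edir (Qe i) = (0, axis i 1)"

fun jdir :: "'n::finite jidx \<Rightarrow> 'n Jpt" where
  "jdir Tj = (1, 0, 0)"
| "jdir (Qj i) = (0, axis i 1, 0)"
| "jdir (Pj i) = (0, 0, axis i 1)"

definition pdE :: "'n::finite eidx \<Rightarrow> ('n Ept \<Rightarrow> real) \<Rightarrow> 'n Ept \<Rightarrow> real" where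
  "pdE a f x = pd f (edir a) x"

definition pdJ :: "'n::finite jidx \<Rightarrow> ('n Jpt \<Rightarrow> real) \<Rightarrow> 'n Jpt \<Rightarrow> real" where
  "pdJ a f x = pd f (jdir a) x"

definition jsum :: "('n::finite jidx \<Rightarrow> real) \<Rightarrow> real" where
  "jsum g = g Tj + (\<Sum>i\<in>UNIV. g (Qj i)) + (\<Sum>i\<in>UNIV. g (Pj i))"

text \<open>Vector fields and 1-forms on J1 tau*: components (in the coordinate frame
  d/dt, d/dq^i, d/dp_i, resp. dt, dq^i, dp_i). A (1,1) tensor S: S a b is the
  coefficient of (d/dx^a) \<otimes> dx^b.\<close>
type_synonym 'n jfield = "'n jidx \<Rightarrow> 'n Jpt \<Rightarrow> real"
type_synonym 'n jtensor = "'n jidx \<Rightarrow> 'n jidx \<Rightarrow> 'n Jpt \<Rightarrow> real"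
type_synonym 'n etensor = "'n eidx \<Rightarrow> 'n eidx \<Rightarrow> 'n Ept \<Rightarrow> real"

definition apply_vf :: "'n::finite jtensor \<Rightarrow> 'n jfield \<Rightarrow> 'n jfield" where
  "apply_vf S Z a x = jsum (\<lambda>b. S a b x * Z b x)"

text \<open>Adjoint action on 1-forms: <Z, S sigma> = <S Z, sigma>.\<close>
definition apply_form :: "'n::finite jtensor \<Rightarrow> 'n jfield \<Rightarrow> 'n jfield" where
  "apply_form S \<sigma> b x = jsum (\<lambda>a. S a b x * \<sigma> a x)"

definition lie_form :: "'n::finite jfield \<Rightarrow> 'n jfield \<Rightarrow> 'n jfield" where
  "lie_form X \<sigma> a x = jsum (\<lambda>b. X b x * pdJ b (\<sigma> a) x + \<sigma> b x * pdJ a (X b) x)"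

definition lie_tensor :: "'n::finite jfield \<Rightarrow> 'n jtensor \<Rightarrow> 'n jtensor" where
  "lie_tensor X S a b x =
     jsum (\<lambda>c. X c x * pdJ c (S a b) x - S c b x * pdJ c (X a) x + S a c x * pdJ b (X c) x)"

text \<open>Canonical Poisson map P of Lambda = d/dq^i \<and> d/dp_i:
  Lambda(alpha,beta) = alpha_q beta_p - alpha_p beta_q = <P alpha, beta>.\<close>
fun Pmap :: "'n jfield \<Rightarrow> 'n jfield" where
  "Pmap \<alpha> Tj x = 0"
| "Pmap \<alpha> (Qj i) x = - \<alpha> (Pj i) x"
| "Pmap \<alpha> (Pj i) x = \<alpha> (Qj i) x"

text \<open>Complete lift of R (components R^i_j = R (Qe i) (Qe j), R^i_0 = R (Qe i) Te),
  exactly the local formula of the paper.\<close>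
fun clift :: "'n::finite etensor \<Rightarrow> 'n jtensor" where
  "clift R (Qj i) (Qj j) x = R (Qe i) (Qe j) (fst x, fst (snd x))"
| "clift R (Pj j) (Pj i) x = R (Qe i) (Qe j) (fst x, fst (snd x))"
| "clift R (Qj i) Tj x = R (Qe i) Te (fst x, fst (snd x))"
| "clift R (Pj j) (Qj k) x =
     (\<Sum>i\<in>UNIV. snd (snd x) $ i *
        (pdE (Qe k) (R (Qe i) (Qe j)) (fst x, fst (snd x))
         - pdE (Qe j) (R (Qe i) (Qe k)) (fst x, fst (snd x))))"
| "clift R (Pj k) Tj x =
     (\<Sum>i\<in>UNIV. snd (snd x) $ i *
        (pdE Te (R (Qe i) (Qe k)) (fst x, fst (snd x))
         - pdE (Qe k) (R (Qe i) Te) (fst x, fst (snd x))))"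
| "clift R _ _ x = 0"

definition magri_morosi :: "'n::finite jtensor \<Rightarrow> 'n jfield \<Rightarrow> 'n jfield \<Rightarrow> 'n jfield" where
  "magri_morosi S \<sigma> Z a x =
     apply_vf (lie_tensor (Pmap \<sigma>) S) Z a x
     - Pmap (lie_form Z (apply_form S \<sigma>)) a x
     + Pmap (lie_form (apply_vf S Z) \<sigma>) a x"

definition Jdom :: "'n::finite Ept set \<Rightarrow> 'n Jpt set" where
  "Jdom U = {x. (fst x, fst (snd x)) \<in> U}"

end

theory Submission
  imports Defs
begin

text \<open>In coordinates the concomitant is tensorial once \<open>P\<close> and \<open>\<widetilde>R\<close> commute:
  the derivatives of \<open>Z\<close> cancel identically, those of \<open>\<sigma>\<close> cancel because
  \<open>P \<circ> \<widetilde>R = \<widetilde>R \<circ> P\<close>, and what is left is \<open>\<sigma>\<close> and \<open>Z\<close>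
  contracted against a coefficient built from \<open>P\<close> and the first derivatives of \<open>\<widetilde>R\<close>.
  For the complete lift the components of this coefficient are polynomial in the momenta \<open>p\<close>,
  and after differentiating the \<open>p\<close>-linear components of \<open>\<widetilde>R\<close> every one of them
  collapses to a sum of differences of mixed second partial derivatives of \<open>R\<close>, which vanish
  by Schwarz's theorem.\<close>

section \<open>Directional derivatives\<close>

lemma has_real_derivative_along_line:
  fixes f :: "'a::real_normed_vector \<Rightarrow> real"
  assumes "(f has_derivative f') (at (y + s0 *\<^sub>R v))"
  shows "((\<lambda>s. f (y + s *\<^sub>R v)) has_real_derivative f' v) (at s0)"
proof -
  have "((\<lambda>s. y + s *\<^sub>R v) has_derivative (\<lambda>s. s *\<^sub>R v)) (at s0)"
    by (auto intro!: derivative_eq_intros)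
  from has_derivative_compose[OF this assms]
  have "((\<lambda>s. f (y + s *\<^sub>R v)) has_derivative (\<lambda>s. f' (s *\<^sub>R v))) (at s0)"
    by simp
  moreover have "(\<lambda>s. f' (s *\<^sub>R v)) = (\<lambda>s. f' v * s)"
    using has_derivative_bounded_linear[OF assms]
    by (auto simp: bounded_linear.linear linear_cmul mult.commute)
  ultimately show ?thesis
    by (simp add: has_field_derivative_def)
qed

lemma has_derivative_imp_pd:
  fixes f :: "'a::real_normed_vector \<Rightarrow> real"
  assumes "(f has_derivative f') (at y)"
  shows "pd f v y = f' v"
  unfolding pd_def using has_real_derivative_along_line[of f f' y 0 v] assms
  by (simp add: DERIV_imp_deriv)

lemma DERIV_along_line_pd:
  fixes f :: "'a::real_normed_vector \<Rightarrow> real"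
  assumes "f differentiable (at (y + s0 *\<^sub>R v))"
  shows "((\<lambda>s. f (y + s *\<^sub>R v)) has_real_derivative pd f v (y + s0 *\<^sub>R v)) (at s0)"
proof -
  obtain f' where "(f has_derivative f') (at (y + s0 *\<^sub>R v))"
    using assms by (auto simp: differentiable_def)
  then show ?thesis
    using has_real_derivative_along_line has_derivative_imp_pd by metis
qed

lemma pd_zero_direction: "pd f 0 y = 0"
  unfolding pd_def by (simp add: DERIV_imp_deriv)

lemma pd_diff:
  assumes "f differentiable (at y)" "g differentiable (at y)"
  shows "pd (\<lambda>y. f y - g y) v y = pd f v y - pd g v y"
proof -
  obtain f' g' where "(f has_derivative f') (at y)" "(g has_derivative g') (at y)"
    using assms by (auto simp: differentiable_def)
  then show ?thesis
    using has_derivative_imp_pd[of f f' y v] has_derivative_imp_pd[of g g' y v]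
      has_derivative_imp_pd[OF has_derivative_diff, of f f' y g g' v]
    by simp
qed

lemma second_difference_mvt:
  fixes f :: "'a::real_normed_vector \<Rightarrow> real"
  assumes h: "0 < h"
    and square: "\<And>a b. 0 \<le> a \<Longrightarrow> a \<le> h \<Longrightarrow> 0 \<le> b \<Longrightarrow> b \<le> h \<Longrightarrow> y + a *\<^sub>R u + b *\<^sub>R v \<in> U"
    and df: "\<And>z. z \<in> U \<Longrightarrow> f differentiable (at z)"
    and dfu: "\<And>z. z \<in> U \<Longrightarrow> pd f u differentiable (at z)"
  obtains a b where "0 < a" "a < h" "0 < b" "b < h"
    "f (y + h *\<^sub>R u + h *\<^sub>R v) - f (y + h *\<^sub>R u) - f (y + h *\<^sub>R v) + f y
      = h * h * pd (pd f u) v (y + a *\<^sub>R u + b *\<^sub>R v)"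
proof -
  define g where "g s = f ((y + h *\<^sub>R v) + s *\<^sub>R u) - f (y + s *\<^sub>R u)" for s
  have dg: "DERIV g s :> pd f u ((y + h *\<^sub>R v) + s *\<^sub>R u) - pd f u (y + s *\<^sub>R u)"
    if "0 \<le> s" "s \<le> h" for s
    unfolding g_def
    by (intro DERIV_diff DERIV_along_line_pd df)
      (use square[of s h] square[of s 0] that h in \<open>auto simp: add_ac\<close>)
  obtain a where a: "0 < a" "a < h"
    "g h - g 0 = h * (pd f u ((y + h *\<^sub>R v) + a *\<^sub>R u) - pd f u (y + a *\<^sub>R u))"
    using MVT2[OF h dg] by auto
  define k where "k r = pd f u ((y + a *\<^sub>R u) + r *\<^sub>R v)" for r
  have dk: "DERIV k r :> pd (pd f u) v ((y + a *\<^sub>R u) + r *\<^sub>R v)" if "0 \<le> r" "r \<le> h" for r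
    unfolding k_def by (intro DERIV_along_line_pd dfu) (use square[of a r] that a in auto)
  obtain b where b: "0 < b" "b < h"
    "k h - k 0 = h * pd (pd f u) v ((y + a *\<^sub>R u) + b *\<^sub>R v)"
    using MVT2[OF h dk] by auto
  have "g h - g 0 = f (y + h *\<^sub>R u + h *\<^sub>R v) - f (y + h *\<^sub>R u) - f (y + h *\<^sub>R v) + f y"
    unfolding g_def by (simp add: add_ac)
  moreover have "pd f u ((y + h *\<^sub>R v) + a *\<^sub>R u) - pd f u (y + a *\<^sub>R u) = k h - k 0"
    unfolding k_def by (simp add: add_ac)
  ultimately show ?thesis
    using that a b by (simp add: mult.assoc)
qed

lemma small_parallelogram:
  fixes y u v :: "'a::real_normed_vector"
  assumes "\<delta> > 0"
  obtains h where "h > 0"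
    "\<And>a b. 0 \<le> a \<Longrightarrow> a \<le> h \<Longrightarrow> 0 \<le> b \<Longrightarrow> b \<le> h \<Longrightarrow> y + a *\<^sub>R u + b *\<^sub>R v \<in> ball y \<delta>"
proof
  define K where "K = norm u + norm v + 1"
  have K: "K > 0"
    unfolding K_def by (simp add: add_nonneg_pos)
  show h: "\<delta> / (2 * K) > 0"
    using K assms by simp
  fix a b assume ab: "0 \<le> a" "a \<le> \<delta> / (2 * K)" "0 \<le> b" "b \<le> \<delta> / (2 * K)"
  have "norm (a *\<^sub>R u + b *\<^sub>R v) \<le> a * norm u + b * norm v"
    using norm_triangle_ineq[of "a *\<^sub>R u" "b *\<^sub>R v"] ab by simp
  also have "\<dots> \<le> \<delta> / (2 * K) * norm u + \<delta> / (2 * K) * norm v"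
    using ab by (intro add_mono mult_right_mono) auto
  also have "\<dots> \<le> \<delta> / (2 * K) * K"
    using h unfolding K_def by (simp add: distrib_left)
  also have "\<dots> < \<delta>"
    using K assms by simp
  finally show "y + a *\<^sub>R u + b *\<^sub>R v \<in> ball y \<delta>"
    unfolding mem_ball dist_commute[of y] by (simp add: dist_norm add.assoc)
qed

lemma pd_pd_commute:
  fixes f :: "'a::real_normed_vector \<Rightarrow> real"
  assumes U: "open U" "y \<in> U"
    and df: "\<And>z. z \<in> U \<Longrightarrow> f differentiable (at z)"
    and dfu: "\<And>z. z \<in> U \<Longrightarrow> pd f u differentiable (at z)"
    and dfv: "\<And>z. z \<in> U \<Longrightarrow> pd f v differentiable (at z)"
    and cont_uv: "continuous_on U (pd (pd f u) v)"
    and cont_vu: "continuous_on U (pd (pd f v) u)"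
  shows "pd (pd f u) v y = pd (pd f v) u y"
proof (rule ccontr)
  let ?A = "pd (pd f u) v" and ?B = "pd (pd f v) u"
  assume "?A y \<noteq> ?B y"
  define e where "e = \<bar>?A y - ?B y\<bar> / 2"
  have "e > 0"
    using \<open>?A y \<noteq> ?B y\<close> by (simp add: e_def)
  obtain d0 where "d0 > 0" "ball y d0 \<subseteq> U"
    using U openE by blast
  moreover obtain d1 where "d1 > 0" "\<forall>z\<in>U. dist z y < d1 \<longrightarrow> dist (?A z) (?A y) < e"
    using cont_uv U(2) \<open>e > 0\<close> unfolding continuous_on_iff by blast
  moreover obtain d2 where "d2 > 0" "\<forall>z\<in>U. dist z y < d2 \<longrightarrow> dist (?B z) (?B y) < e"
    using cont_vu U(2) \<open>e > 0\<close> unfolding continuous_on_iff by blast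
  ultimately obtain \<delta> where \<delta>: "\<delta> > 0" "ball y \<delta> \<subseteq> U"
    "\<forall>z\<in>ball y \<delta>. dist (?A z) (?A y) < e \<and> dist (?B z) (?B y) < e"
    by (intro that[of "min d0 (min d1 d2)"]) (auto simp: subset_iff dist_commute)
  obtain h where h: "h > 0"
    and near: "\<And>a b. 0 \<le> a \<Longrightarrow> a \<le> h \<Longrightarrow> 0 \<le> b \<Longrightarrow> b \<le> h \<Longrightarrow> y + a *\<^sub>R u + b *\<^sub>R v \<in> ball y \<delta>"
    using small_parallelogram[OF \<delta>(1)] by blast
  have near': "y + a *\<^sub>R v + b *\<^sub>R u \<in> ball y \<delta>" if "0 \<le> a" "a \<le> h" "0 \<le> b" "b \<le> h" for a b
    using near[OF that(3,4,1,2)] by (simp add: algebra_simps)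
  obtain a1 b1 where ab1: "0 < a1" "a1 < h" "0 < b1" "b1 < h"
    "f (y + h *\<^sub>R u + h *\<^sub>R v) - f (y + h *\<^sub>R u) - f (y + h *\<^sub>R v) + f y
      = h * h * ?A (y + a1 *\<^sub>R u + b1 *\<^sub>R v)"
    using second_difference_mvt[OF h, of y u v U f] near \<delta>(2) df dfu by blast
  obtain a2 b2 where ab2: "0 < a2" "a2 < h" "0 < b2" "b2 < h"
    "f (y + h *\<^sub>R v + h *\<^sub>R u) - f (y + h *\<^sub>R v) - f (y + h *\<^sub>R u) + f y
      = h * h * ?B (y + a2 *\<^sub>R v + b2 *\<^sub>R u)"
    using second_difference_mvt[OF h, of y v u U f] near' \<delta>(2) df dfv by blast
  have "f (y + h *\<^sub>R v + h *\<^sub>R u) = f (y + h *\<^sub>R u + h *\<^sub>R v)"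
    by (simp add: add_ac)
  with ab1(5) ab2(5)
  have "h * h * ?A (y + a1 *\<^sub>R u + b1 *\<^sub>R v) = h * h * ?B (y + a2 *\<^sub>R v + b2 *\<^sub>R u)"
    by linarith
  with h have "?A (y + a1 *\<^sub>R u + b1 *\<^sub>R v) = ?B (y + a2 *\<^sub>R v + b2 *\<^sub>R u)"
    by simp
  moreover have "dist (?A (y + a1 *\<^sub>R u + b1 *\<^sub>R v)) (?A y) < e"
    using \<delta>(3) near[of a1 b1] ab1 by auto
  moreover have "dist (?B (y + a2 *\<^sub>R v + b2 *\<^sub>R u)) (?B y) < e"
    using \<delta>(3) near'[of a2 b2] ab2 by auto
  ultimately show False
    unfolding e_def dist_real_def by (simp add: abs_if split: if_splits)
qed

section \<open>Tensoriality of the concomitant in coordinates\<close>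

lemma sum_swap_inner:
  "(\<Sum>a\<in>A. \<Sum>b\<in>B. \<Sum>c\<in>C. f a b c) = (\<Sum>a\<in>A. \<Sum>c\<in>C. \<Sum>b\<in>B. f a b c)"
  by (rule sum.cong[OF refl], rule sum.swap)

lemma sigma_derivative_terms_cancel:
  fixes P s :: "'i::finite \<Rightarrow> 'i \<Rightarrow> real" and dsg :: "'i \<Rightarrow> 'i \<Rightarrow> real" and z :: "'i \<Rightarrow> real"
  assumes PS: "\<And>a e. (\<Sum>c\<in>UNIV. s a c * P c e) = (\<Sum>d\<in>UNIV. P a d * s e d)"
  shows "(\<Sum>b\<in>UNIV. \<Sum>c\<in>UNIV. \<Sum>e\<in>UNIV. s a c * P c e * dsg b e * z b)
       + (\<Sum>d\<in>UNIV. \<Sum>b\<in>UNIV. \<Sum>c\<in>UNIV. P a d * s b c * z c * dsg b d)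
       = (\<Sum>b\<in>UNIV. \<Sum>c\<in>UNIV. \<Sum>e\<in>UNIV. s c b * P a e * dsg c e * z b)
       + (\<Sum>d\<in>UNIV. \<Sum>b\<in>UNIV. \<Sum>c\<in>UNIV. P a d * z b * s c d * dsg b c)"
proof -
  have "(\<Sum>b\<in>UNIV. \<Sum>c\<in>UNIV. \<Sum>e\<in>UNIV. s a c * P c e * dsg b e * z b)
      = (\<Sum>b\<in>UNIV. \<Sum>e\<in>UNIV. dsg b e * z b * (\<Sum>c\<in>UNIV. s a c * P c e))"
    by (subst sum_swap_inner) (simp add: sum_distrib_left algebra_simps)
  also have "\<dots> = (\<Sum>b\<in>UNIV. \<Sum>e\<in>UNIV. dsg b e * z b * (\<Sum>d\<in>UNIV. P a d * s e d))"
    by (simp only: PS)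
  also have "\<dots> = (\<Sum>b\<in>UNIV. \<Sum>d\<in>UNIV. \<Sum>e\<in>UNIV. P a d * z b * s e d * dsg b e)"
    by (subst sum_swap_inner) (simp add: sum_distrib_left algebra_simps)
  also have "\<dots> = (\<Sum>d\<in>UNIV. \<Sum>b\<in>UNIV. \<Sum>c\<in>UNIV. P a d * z b * s c d * dsg b c)"
    by (rule sum.swap)
  finally have "(\<Sum>b\<in>UNIV. \<Sum>c\<in>UNIV. \<Sum>e\<in>UNIV. s a c * P c e * dsg b e * z b)
      = (\<Sum>d\<in>UNIV. \<Sum>b\<in>UNIV. \<Sum>c\<in>UNIV. P a d * z b * s c d * dsg b c)" .
  moreover have "(\<Sum>d\<in>UNIV. \<Sum>b\<in>UNIV. \<Sum>c\<in>UNIV. P a d * s b c * z c * dsg b d)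
      = (\<Sum>c\<in>UNIV. \<Sum>b\<in>UNIV. \<Sum>d\<in>UNIV. P a d * s b c * z c * dsg b d)"
    by (subst sum.swap, subst sum_swap_inner, rule sum.swap)
  ultimately show ?thesis
    by (simp add: mult_ac)
qed

lemma concomitant_coordinate_identity:
  fixes P s :: "'i::finite \<Rightarrow> 'i \<Rightarrow> real" and ds :: "'i \<Rightarrow> 'i \<Rightarrow> 'i \<Rightarrow> real"
    and sg z :: "'i \<Rightarrow> real" and dsg dz :: "'i \<Rightarrow> 'i \<Rightarrow> real"
  assumes PS: "\<And>a e. (\<Sum>c\<in>UNIV. s a c * P c e) = (\<Sum>d\<in>UNIV. P a d * s e d)"
  shows "(\<Sum>b\<in>UNIV. (\<Sum>c\<in>UNIV. (\<Sum>e\<in>UNIV. P c e * sg e) * ds c a b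
              - s c b * (\<Sum>e\<in>UNIV. P a e * dsg c e) + s a c * (\<Sum>e\<in>UNIV. P c e * dsg b e)) * z b)
     - (\<Sum>d\<in>UNIV. P a d * (\<Sum>b\<in>UNIV. z b * (\<Sum>c\<in>UNIV. s c d * dsg b c + ds b c d * sg c)
              + (\<Sum>c\<in>UNIV. s c b * sg c) * dz d b))
     + (\<Sum>d\<in>UNIV. P a d * (\<Sum>b\<in>UNIV. (\<Sum>c\<in>UNIV. s b c * z c) * dsg b d
              + sg b * (\<Sum>c\<in>UNIV. s b c * dz d c + ds d b c * z c)))
   = (\<Sum>b\<in>UNIV. \<Sum>e\<in>UNIV. sg e * z b *
       ((\<Sum>c\<in>UNIV. P c e * ds c a b) - (\<Sum>d\<in>UNIV. P a d * ds b e d) + (\<Sum>d\<in>UNIV. P a d * ds d e b)))"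
    (is "?lhs = ?rhs")
proof -
  have "?lhs =
      ((\<Sum>b\<in>UNIV. \<Sum>c\<in>UNIV. \<Sum>e\<in>UNIV. P c e * sg e * ds c a b * z b)
       - (\<Sum>d\<in>UNIV. \<Sum>b\<in>UNIV. \<Sum>c\<in>UNIV. P a d * z b * ds b c d * sg c)
       + (\<Sum>d\<in>UNIV. \<Sum>b\<in>UNIV. \<Sum>c\<in>UNIV. P a d * sg b * ds d b c * z c))
    + ((\<Sum>b\<in>UNIV. \<Sum>c\<in>UNIV. \<Sum>e\<in>UNIV. s a c * P c e * dsg b e * z b)
       + (\<Sum>d\<in>UNIV. \<Sum>b\<in>UNIV. \<Sum>c\<in>UNIV. P a d * s b c * z c * dsg b d)
       - (\<Sum>b\<in>UNIV. \<Sum>c\<in>UNIV. \<Sum>e\<in>UNIV. s c b * P a e * dsg c e * z b)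
       - (\<Sum>d\<in>UNIV. \<Sum>b\<in>UNIV. \<Sum>c\<in>UNIV. P a d * z b * s c d * dsg b c))
    + ((\<Sum>d\<in>UNIV. \<Sum>b\<in>UNIV. \<Sum>c\<in>UNIV. P a d * sg b * s b c * dz d c)
       - (\<Sum>d\<in>UNIV. \<Sum>b\<in>UNIV. \<Sum>c\<in>UNIV. P a d * s c b * sg c * dz d b))"
    by (simp add: sum_distrib_left sum_distrib_right sum.distrib sum_subtractf algebra_simps)
  also have "(\<Sum>d\<in>UNIV. \<Sum>b\<in>UNIV. \<Sum>c\<in>UNIV. P a d * s c b * sg c * dz d b)
           = (\<Sum>d\<in>UNIV. \<Sum>b\<in>UNIV. \<Sum>c\<in>UNIV. P a d * sg b * s b c * dz d c)"
    by (subst sum_swap_inner) (simp add: mult_ac)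
  also note sigma_derivative_terms_cancel[OF PS]
  also have "(\<Sum>b\<in>UNIV. \<Sum>c\<in>UNIV. \<Sum>e\<in>UNIV. P c e * sg e * ds c a b * z b)
           = (\<Sum>b\<in>UNIV. \<Sum>e\<in>UNIV. sg e * z b * (\<Sum>c\<in>UNIV. P c e * ds c a b))"
    by (subst sum_swap_inner) (simp add: sum_distrib_left mult_ac)
  also have "(\<Sum>d\<in>UNIV. \<Sum>b\<in>UNIV. \<Sum>c\<in>UNIV. P a d * z b * ds b c d * sg c)
           = (\<Sum>b\<in>UNIV. \<Sum>e\<in>UNIV. sg e * z b * (\<Sum>d\<in>UNIV. P a d * ds b e d))"
    by (subst sum.swap, subst sum_swap_inner) (simp add: sum_distrib_left mult_ac)
  also have "(\<Sum>d\<in>UNIV. \<Sum>b\<in>UNIV. \<Sum>c\<in>UNIV. P a d * sg b * ds d b c * z c)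
           = (\<Sum>b\<in>UNIV. \<Sum>e\<in>UNIV. sg e * z b * (\<Sum>d\<in>UNIV. P a d * ds d e b))"
    by (subst sum.swap, subst sum_swap_inner, subst sum.swap) (simp add: sum_distrib_left mult_ac)
  finally show ?thesis
    by (simp add: sum.distrib sum_subtractf algebra_simps)
qed

lemma UNIV_jidx: "(UNIV :: 'n jidx set) = insert Tj (range Qj \<union> range Pj)"
  by (auto, case_tac x, auto)

instance jidx :: (finite) finite
  by standard (simp add: UNIV_jidx)

lemma sum_UNIV_jidx:
  fixes g :: "'n::finite jidx \<Rightarrow> 'b::comm_monoid_add"
  shows "(\<Sum>a\<in>UNIV. g a) = g Tj + (\<Sum>i\<in>UNIV. g (Qj i)) + (\<Sum>i\<in>UNIV. g (Pj i))"
proof -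
  have "(\<Sum>a\<in>UNIV. g a) = g Tj + (sum g (range Qj) + sum g (range Pj))"
    unfolding UNIV_jidx by (simp add: image_iff) (subst sum.union_disjoint; auto)
  then show ?thesis
    by (simp add: sum.reindex inj_on_def add.assoc)
qed

lemma jsum_eq_sum: "jsum g = (\<Sum>a\<in>UNIV. g a)"
  unfolding jsum_def sum_UNIV_jidx ..

fun Pmat :: "'n jidx \<Rightarrow> 'n jidx \<Rightarrow> real" where
  "Pmat (Qj i) (Pj j) = (if i = j then -1 else 0)"
| "Pmat (Pj i) (Qj j) = (if i = j then 1 else 0)"
| "Pmat _ _ = 0"

lemma if_zero_mult: "(if P then a else 0) * (c::real) = (if P then a * c else 0)"
  by simp

lemma mult_if_zero: "(c::real) * (if P then a else 0) = (if P then c * a else 0)"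
  by simp

lemma Pmap_eq_sum:
  fixes \<alpha> :: "'n::finite jfield"
  shows "Pmap \<alpha> a = (\<lambda>y. \<Sum>d\<in>UNIV. Pmat a d * \<alpha> d y)"
  by (rule ext, cases a) (simp_all add: sum_UNIV_jidx if_zero_mult)

lemma apply_form_eq_sum: "apply_form S \<sigma> b = (\<lambda>y. \<Sum>a\<in>UNIV. S a b y * \<sigma> a y)"
  by (rule ext) (simp add: apply_form_def jsum_eq_sum)

lemma apply_vf_eq_sum: "apply_vf S Z a = (\<lambda>y. \<Sum>b\<in>UNIV. S a b y * Z b y)"
  by (rule ext) (simp add: apply_vf_def jsum_eq_sum)

text \<open>Only coordinate partial derivatives at the single point \<open>x\<close> enter the concomitant,
  so this notion, weaker than differentiability, suffices.\<close>

definition coord_differentiable :: "('n::finite Jpt \<Rightarrow> real) \<Rightarrow> 'n Jpt \<Rightarrow> bool" where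
  "coord_differentiable f x \<longleftrightarrow>
     (\<forall>c. ((\<lambda>s. f (x + s *\<^sub>R jdir c)) has_real_derivative pdJ c f x) (at 0))"

lemma pdJ_eqI: "((\<lambda>s. f (x + s *\<^sub>R jdir c)) has_real_derivative D) (at 0) \<Longrightarrow> pdJ c f x = D"
  unfolding pdJ_def pd_def by (rule DERIV_imp_deriv)

lemma coord_differentiableI:
  "(\<And>c. ((\<lambda>s. f (x + s *\<^sub>R jdir c)) has_real_derivative D c) (at 0)) \<Longrightarrow> coord_differentiable f x"
  unfolding coord_differentiable_def using pdJ_eqI by metis

lemma coord_differentiableD:
  "coord_differentiable f x \<Longrightarrow> ((\<lambda>s. f (x + s *\<^sub>R jdir c)) has_real_derivative pdJ c f x) (at 0)"
  unfolding coord_differentiable_def by blast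

lemma DERIV_coord_mult:
  assumes "coord_differentiable f x" "coord_differentiable g x"
  shows "((\<lambda>s. f (x + s *\<^sub>R jdir c) * g (x + s *\<^sub>R jdir c)) has_real_derivative
           f x * pdJ c g x + pdJ c f x * g x) (at 0)"
  using DERIV_mult[OF coord_differentiableD[OF assms(1)] coord_differentiableD[OF assms(2)]]
  by (simp add: ac_simps)

lemma coord_differentiable_mult [simp]:
  "coord_differentiable f x \<Longrightarrow> coord_differentiable g x \<Longrightarrow> coord_differentiable (\<lambda>y. f y * g y) x"
  by (rule coord_differentiableI, rule DERIV_coord_mult)

lemma pdJ_mult [simp]:
  "coord_differentiable f x \<Longrightarrow> coord_differentiable g x \<Longrightarrow>
   pdJ c (\<lambda>y. f y * g y) x = f x * pdJ c g x + pdJ c f x * g x"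
  by (rule pdJ_eqI, rule DERIV_coord_mult)

lemma coord_differentiable_const [simp]: "coord_differentiable (\<lambda>y. k) x"
  by (rule coord_differentiableI, rule DERIV_const)

lemma pdJ_const [simp]: "pdJ c (\<lambda>y. k) x = 0"
  by (rule pdJ_eqI, rule DERIV_const)

lemma DERIV_coord_sum:
  "(\<And>b. coord_differentiable (F b) x) \<Longrightarrow>
   ((\<lambda>s. \<Sum>b\<in>A. F b (x + s *\<^sub>R jdir c)) has_real_derivative (\<Sum>b\<in>A. pdJ c (F b) x)) (at 0)"
  by (rule DERIV_sum, rule coord_differentiableD)

lemma coord_differentiable_sum [simp]:
  "(\<And>b. coord_differentiable (F b) x) \<Longrightarrow> coord_differentiable (\<lambda>y. \<Sum>b\<in>A. F b y) x"
  by (rule coord_differentiableI, rule DERIV_coord_sum)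

lemma pdJ_sum [simp]:
  "(\<And>b. coord_differentiable (F b) x) \<Longrightarrow> pdJ c (\<lambda>y. \<Sum>b\<in>A. F b y) x = (\<Sum>b\<in>A. pdJ c (F b) x)"
  by (rule pdJ_eqI, rule DERIV_coord_sum)

definition concomitant_coeff :: "'n::finite jtensor \<Rightarrow> 'n jidx \<Rightarrow> 'n jidx \<Rightarrow> 'n jidx \<Rightarrow> 'n Jpt \<Rightarrow> real" where
  "concomitant_coeff S a b e x =
     (\<Sum>c\<in>UNIV. Pmat c e * pdJ c (S a b) x) - (\<Sum>d\<in>UNIV. Pmat a d * pdJ b (S e d) x)
     + (\<Sum>d\<in>UNIV. Pmat a d * pdJ d (S e b) x)"

lemma magri_morosi_eq_contraction:
  fixes S :: "'n::finite jtensor"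
  assumes "\<And>a b. coord_differentiable (S a b) x"
    and "\<And>a. coord_differentiable (\<sigma> a) x" and "\<And>a. coord_differentiable (Z a) x"
    and commute: "\<And>a e. (\<Sum>c\<in>UNIV. S a c x * Pmat c e) = (\<Sum>d\<in>UNIV. Pmat a d * S e d x)"
  shows "magri_morosi S \<sigma> Z a x
    = (\<Sum>b\<in>UNIV. \<Sum>e\<in>UNIV. \<sigma> e x * Z b x * concomitant_coeff S a b e x)"
  using concomitant_coordinate_identity[where P=Pmat and s="\<lambda>a b. S a b x"
      and ds="\<lambda>c a b. pdJ c (S a b) x" and sg="\<lambda>e. \<sigma> e x" and dsg="\<lambda>c e. pdJ c (\<sigma> e) x"
      and z="\<lambda>b. Z b x" and dz="\<lambda>c b. pdJ c (Z b) x" and a=a, OF commute]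
  unfolding magri_morosi_def Pmap_eq_sum concomitant_coeff_def
  by (simp add: apply_vf_def lie_tensor_def lie_form_def jsum_eq_sum apply_form_eq_sum
      apply_vf_eq_sum assms)

section \<open>The complete lift\<close>

definition base :: "'n Jpt \<Rightarrow> 'n Ept" where
  "base x = (fst x, fst (snd x))"

fun base_dir :: "'n::finite jidx \<Rightarrow> 'n Ept" where
  "base_dir Tj = edir Te"
| "base_dir (Qj i) = edir (Qe i)"
| "base_dir (Pj i) = 0"

lemma base_along_line: "base (x + s *\<^sub>R jdir c) = base x + s *\<^sub>R base_dir c"
  by (cases c) (auto simp: base_def)

lemma DERIV_comp_base:
  assumes "f differentiable (at (base x))"
  shows "((\<lambda>s. f (base (x + s *\<^sub>R jdir c))) has_real_derivative pd f (base_dir c) (base x)) (at 0)"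
  using DERIV_along_line_pd[of f "base x" 0 "base_dir c"] assms
  unfolding base_along_line by simp

lemma coord_differentiable_comp_base [simp]:
  "f differentiable (at (base x)) \<Longrightarrow> coord_differentiable (\<lambda>x. f (base x)) x"
  by (rule coord_differentiableI, rule DERIV_comp_base)

lemma pdJ_comp_base [simp]:
  assumes "f differentiable (at (base x))"
  shows "pdJ Tj (\<lambda>x. f (base x)) x = pdE Te f (base x)"
    and "pdJ (Qj i) (\<lambda>x. f (base x)) x = pdE (Qe i) f (base x)"
    and "pdJ (Pj i) (\<lambda>x. f (base x)) x = 0"
  using pdJ_eqI[OF DERIV_comp_base[OF assms]] by (simp_all add: pdE_def pd_zero_direction)

lemma DERIV_momentum:
  "((\<lambda>s. snd (snd (x + s *\<^sub>R jdir c)) $ i) has_real_derivative snd (snd (jdir c)) $ i) (at 0)"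
proof -
  have "(\<lambda>s. snd (snd (x + s *\<^sub>R jdir c)) $ i) = (\<lambda>s. snd (snd x) $ i + s * snd (snd (jdir c)) $ i)"
    by auto
  then show ?thesis
    by (auto intro!: derivative_eq_intros)
qed

lemma coord_differentiable_momentum [simp]: "coord_differentiable (\<lambda>x. snd (snd x) $ i) x"
  by (rule coord_differentiableI, rule DERIV_momentum)

lemma pdJ_momentum [simp]:
  "pdJ Tj (\<lambda>x. snd (snd x) $ i) x = 0"
  "pdJ (Qj m) (\<lambda>x. snd (snd x) $ i) x = 0"
  "pdJ (Pj m) (\<lambda>x. snd (snd x) $ i) x = (if i = m then 1 else 0)"
  by (simp_all add: pdJ_eqI[OF DERIV_momentum] axis_def)

definition lift_coeff_q :: "'n::finite etensor \<Rightarrow> 'n \<Rightarrow> 'n \<Rightarrow> 'n \<Rightarrow> 'n Ept \<Rightarrow> real" where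
  "lift_coeff_q R j k i y = pdE (Qe k) (R (Qe i) (Qe j)) y - pdE (Qe j) (R (Qe i) (Qe k)) y"

definition lift_coeff_t :: "'n::finite etensor \<Rightarrow> 'n \<Rightarrow> 'n \<Rightarrow> 'n Ept \<Rightarrow> real" where
  "lift_coeff_t R k i y = pdE Te (R (Qe i) (Qe k)) y - pdE (Qe k) (R (Qe i) Te) y"

lemma clift_eq:
  "clift R (Qj i) (Qj j) = (\<lambda>x. R (Qe i) (Qe j) (base x))"
  "clift R (Pj j) (Pj i) = (\<lambda>x. R (Qe i) (Qe j) (base x))"
  "clift R (Qj i) Tj = (\<lambda>x. R (Qe i) Te (base x))"
  "clift R (Pj j) (Qj k) = (\<lambda>x. \<Sum>i\<in>UNIV. snd (snd x) $ i * lift_coeff_q R j k i (base x))"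
  "clift R (Pj k) Tj = (\<lambda>x. \<Sum>i\<in>UNIV. snd (snd x) $ i * lift_coeff_t R k i (base x))"
  "clift R Tj b = (\<lambda>x. 0)"
  "clift R (Qj i) (Pj j) = (\<lambda>x. 0)"
  by (auto simp: base_def lift_coeff_q_def lift_coeff_t_def)

lemma Pmat_clift_commute:
  "(\<Sum>c\<in>UNIV. clift R a c x * Pmat c e) = (\<Sum>d\<in>UNIV. Pmat a d * clift R e d x)"
  by (cases a; cases e)
    (simp_all add: sum_UNIV_jidx if_zero_mult mult_if_zero sum_subtractf right_diff_distrib)

context
  fixes R :: "'n::finite etensor" and x :: "'n Jpt"
  assumes dR: "\<And>a b. R a b differentiable (at (base x))"
    and dR1: "\<And>a b c. pdE c (R a b) differentiable (at (base x))"
    and pdE_commute: "\<And>a b c d. pdE c (pdE d (R a b)) (base x) = pdE d (pdE c (R a b)) (base x)"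
begin

lemma lift_coeff_q_differentiable: "lift_coeff_q R j k i differentiable (at (base x))"
  unfolding lift_coeff_q_def[abs_def] using dR1 by (intro differentiable_diff)

lemma lift_coeff_t_differentiable: "lift_coeff_t R k i differentiable (at (base x))"
  unfolding lift_coeff_t_def[abs_def] using dR1 by (intro differentiable_diff)

lemma coord_differentiable_clift: "coord_differentiable (clift R a b) x"
  by (cases a; cases b)
    (simp_all add: clift_eq dR lift_coeff_q_differentiable lift_coeff_t_differentiable)

lemma pdE_lift_coeff_q:
  "pdE c (lift_coeff_q R j k i) (base x)
     = pdE c (pdE (Qe k) (R (Qe i) (Qe j))) (base x) - pdE c (pdE (Qe j) (R (Qe i) (Qe k))) (base x)"
  unfolding pdE_def[of c] lift_coeff_q_def[abs_def] by (rule pd_diff; rule dR1)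

lemma pdE_lift_coeff_t:
  "pdE c (lift_coeff_t R k i) (base x)
     = pdE c (pdE Te (R (Qe i) (Qe k))) (base x) - pdE c (pdE (Qe k) (R (Qe i) Te)) (base x)"
  unfolding pdE_def[of c] lift_coeff_t_def[abs_def] by (rule pd_diff; rule dR1)

text \<open>A case distinction over the 27 index triples; in each case the terms cancel after
  interchanging mixed second partial derivatives of \<open>R\<close>.\<close>

lemma concomitant_coeff_clift: "concomitant_coeff (clift R) a b e x = 0"
  unfolding concomitant_coeff_def
  apply (cases a; cases b; cases e)
   apply (simp_all add: clift_eq dR lift_coeff_q_differentiable lift_coeff_t_differentiable
      sum_UNIV_jidx if_zero_mult mult_if_zero)
  apply (simp_all add: pdE_lift_coeff_q pdE_lift_coeff_t lift_coeff_q_def lift_coeff_t_def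
      sum_subtractf right_diff_distrib sum.distrib)
  apply (simp_all add: pdE_commute)
  done

end

lemma smooth_on_imp_differentiable:
  "smooth_on U f \<Longrightarrow> open U \<Longrightarrow> y \<in> U \<Longrightarrow> f differentiable (at y)"
  unfolding smooth_on_def using differentiable_on_eq_differentiable_at
  by (metis Ck_on.simps(2))

lemma smooth_on_imp_continuous_on: "smooth_on U f \<Longrightarrow> continuous_on U f"
  unfolding smooth_on_def by (metis Ck_on.simps(1))

lemma smooth_on_pd: "smooth_on U f \<Longrightarrow> v \<in> Basis \<Longrightarrow> smooth_on U (pd f v)"
  unfolding smooth_on_def by (metis Ck_on.simps(2))

lemma edir_in_Basis: "edir a \<in> (Basis :: 'n::finite Ept set)"
  by (cases a) (auto simp: Basis_prod_def Basis_vec_def)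

lemma smooth_on_pdE: "smooth_on U f \<Longrightarrow> smooth_on U (pdE a f)"
  unfolding pdE_def[abs_def] by (rule smooth_on_pd[OF _ edir_in_Basis])

lemma smooth_on_pdE_commute:
  assumes U: "open U" "y \<in> U" and f: "smooth_on U f"
  shows "pdE c (pdE d f) y = pdE d (pdE c f) y"
proof -
  have smooth: "smooth_on U (pd f (edir c))" "smooth_on U (pd f (edir d))"
    using f by (simp_all add: smooth_on_pd edir_in_Basis)
  have "pd (pd f (edir d)) (edir c) y = pd (pd f (edir c)) (edir d) y"
  proof (rule pd_pd_commute[OF U])
    fix z assume "z \<in> U"
    then show "f differentiable (at z)" "pd f (edir d) differentiable (at z)"
      "pd f (edir c) differentiable (at z)"
      using U(1) f smooth by (simp_all add: smooth_on_imp_differentiable)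
  next
    show "continuous_on U (pd (pd f (edir d)) (edir c))"
      "continuous_on U (pd (pd f (edir c)) (edir d))"
      using smooth by (simp_all add: smooth_on_imp_continuous_on smooth_on_pd edir_in_Basis)
  qed
  then show ?thesis
    unfolding pdE_def[abs_def] .
qed

lemma open_Jdom:
  fixes U :: "'n::finite Ept set"
  assumes "open U"
  shows "open (Jdom U)"
proof -
  have "Jdom U = (\<lambda>x. (fst x, fst (snd x))) -` U"
    by (auto simp: Jdom_def)
  moreover have "continuous_on UNIV (\<lambda>x::'n Jpt. (fst x, fst (snd x)))"
    by (intro continuous_intros)
  ultimately show ?thesis
    using open_vimage[OF assms] by simp
qed

lemma smooth_on_coord_differentiable:
  assumes "open V" "smooth_on V f" "x \<in> V"
  shows "coord_differentiable f x"
proof (rule coord_differentiableI)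
  fix c
  have "f differentiable (at (x + 0 *\<^sub>R jdir c))"
    using smooth_on_imp_differentiable[OF assms(2,1,3)] by simp
  from DERIV_along_line_pd[OF this]
  show "((\<lambda>s. f (x + s *\<^sub>R jdir c)) has_real_derivative pd f (jdir c) x) (at 0)"
    by simp
qed

text \<open>The hypothesis \<open>R(dt) = 0\<close> is not used: the coordinate formula for the complete
  lift only involves the components \<open>R\<^sup>i\<^sub>j\<close> and \<open>R\<^sup>i\<^sub>0\<close>, so the hypothesis
  is already built into \<open>clift\<close>.\<close>

theorem proposition7:
  fixes R :: "'n::finite etensor" and U :: "'n Ept set"
    and \<sigma> Z :: "'n jfield"
  assumes "open U"
    and "\<forall>a b. smooth_on U (R a b)"
    and "\<forall>b x. x \<in> U \<longrightarrow> R Te b x = 0"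
    and "\<forall>a. smooth_on (Jdom U) (\<sigma> a)"
    and "\<forall>a. smooth_on (Jdom U) (Z a)"
  shows "\<forall>a. \<forall>x\<in>Jdom U. magri_morosi (clift R) \<sigma> Z a x = 0"
proof (intro allI ballI)
  fix a x assume x: "x \<in> Jdom U"
  then have "base x \<in> U"
    by (simp add: Jdom_def base_def)
  then have dR: "\<And>a b. R a b differentiable (at (base x))"
    and dR1: "\<And>a b c. pdE c (R a b) differentiable (at (base x))"
    and commute: "\<And>a b c d. pdE c (pdE d (R a b)) (base x) = pdE d (pdE c (R a b)) (base x)"
    using assms(1,2) smooth_on_imp_differentiable smooth_on_pdE smooth_on_pdE_commute by blast+
  have "\<And>f. smooth_on (Jdom U) f \<Longrightarrow> coord_differentiable f x"
    using smooth_on_coord_differentiable[OF open_Jdom[OF assms(1)] _ x] .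
  then have "magri_morosi (clift R) \<sigma> Z a x
      = (\<Sum>b\<in>UNIV. \<Sum>e\<in>UNIV. \<sigma> e x * Z b x * concomitant_coeff (clift R) a b e x)"
    using assms(4,5)
    by (intro magri_morosi_eq_contraction coord_differentiable_clift[OF dR dR1 commute]
        Pmat_clift_commute) auto
  also have "\<dots> = 0"
    by (simp add: concomitant_coeff_clift[OF dR dR1 commute])
  finally show "magri_morosi (clift R) \<sigma> Z a x = 0" .
qed

end
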